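(* If $R$ is a simple compact Hausdorff topological semiring, then $\{0\}$ and $R$ are the only closed subtractive ideals of $R$.
   Context: A semiring is an algebra $(R,+,\cdot,0)$ such that $(R,+,0)$ is a commutative monoid, $(R,\cdot)$ is a semigroup (no multiplicative identity is required), multiplication distributes over addition on both sides, and $0\cdot x = x\cdot 0 = 0$ for all $x\in R$. A topological semiring is a semiring with a topology in which addition and multiplication are continuous. A Hausdorff topological semiring $R$ is called simple if every non-constant continuous semiring homomorphism from $R$ into any Hausdorff topological semiring is injective. An ideal of $R$ is a submonoid $A$ of $(R,+,0)$ with $RA\cup AR\subseteq A$. A subset $A\subseteq R$ is subtractive if for all $x\in R$ and $a\in A$, $x+a\in A$ implies $x\in A$. *)

theory Defs
  imports "HOL-Analysis.Analysis"
begin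

definition semiring_on :: "'a set \<Rightarrow> ('a \<Rightarrow> 'a \<Rightarrow> 'a) \<Rightarrow> ('a \<Rightarrow> 'a \<Rightarrow> 'a) \<Rightarrow> 'a \<Rightarrow> bool" where
  "semiring_on S ad mu z \<longleftrightarrow>
     z \<in> S \<and>
     (\<forall>x\<in>S. \<forall>y\<in>S. ad x y \<in> S \<and> mu x y \<in> S) \<and>
     (\<forall>x\<in>S. \<forall>y\<in>S. \<forall>w\<in>S. ad (ad x y) w = ad x (ad y w)) \<and>
     (\<forall>x\<in>S. \<forall>y\<in>S. ad x y = ad y x) \<and>
     (\<forall>x\<in>S. ad z x = x) \<and>
     (\<forall>x\<in>S. \<forall>y\<in>S. \<forall>w\<in>S. mu (mu x y) w = mu x (mu y w)) \<and>
     (\<forall>x\<in>S. \<forall>y\<in>S. \<forall>w\<in>S. mu x (ad y w) = ad (mu x y) (mu x w)) \<and>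
     (\<forall>x\<in>S. \<forall>y\<in>S. \<forall>w\<in>S. mu (ad y w) x = ad (mu y x) (mu w x)) \<and>
     (\<forall>x\<in>S. mu z x = z \<and> mu x z = z)"

definition top_semiring :: "'a topology \<Rightarrow> ('a \<Rightarrow> 'a \<Rightarrow> 'a) \<Rightarrow> ('a \<Rightarrow> 'a \<Rightarrow> 'a) \<Rightarrow> 'a \<Rightarrow> bool" where
  "top_semiring T ad mu z \<longleftrightarrow>
     semiring_on (topspace T) ad mu z \<and>
     continuous_map (prod_topology T T) T (\<lambda>(x, y). ad x y) \<and>
     continuous_map (prod_topology T T) T (\<lambda>(x, y). mu x y)"

definition semiring_hom_on ::
  "'a set \<Rightarrow> ('a \<Rightarrow> 'a \<Rightarrow> 'a) \<Rightarrow> ('a \<Rightarrow> 'a \<Rightarrow> 'a) \<Rightarrow> 'a \<Rightarrow>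
   'b set \<Rightarrow> ('b \<Rightarrow> 'b \<Rightarrow> 'b) \<Rightarrow> ('b \<Rightarrow> 'b \<Rightarrow> 'b) \<Rightarrow> 'b \<Rightarrow> ('a \<Rightarrow> 'b) \<Rightarrow> bool" where
  "semiring_hom_on S ad mu z S' ad' mu' z' f \<longleftrightarrow>
     f ` S \<subseteq> S' \<and> f z = z' \<and>
     (\<forall>x\<in>S. \<forall>y\<in>S. f (ad x y) = ad' (f x) (f y) \<and> f (mu x y) = mu' (f x) (f y))"

text \<open>Target semirings range over carriers
  inside the type 'a set (this is equivalent to arbitrary targets,
  since one may replace a target by the image of the homomorphism).\<close>
definition simple_top_semiring :: "'a topology \<Rightarrow> ('a \<Rightarrow> 'a \<Rightarrow> 'a) \<Rightarrow> ('a \<Rightarrow> 'a \<Rightarrow> 'a) \<Rightarrow> 'a \<Rightarrow> bool" where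
  "simple_top_semiring T ad mu z \<longleftrightarrow>
     top_semiring T ad mu z \<and> Hausdorff_space T \<and>
     (\<forall>(T' :: 'a set topology) ad' mu' z' f.
        top_semiring T' ad' mu' z' \<and> Hausdorff_space T' \<and>
        semiring_hom_on (topspace T) ad mu z (topspace T') ad' mu' z' f \<and>
        continuous_map T T' f \<and>
        (\<exists>x\<in>topspace T. \<exists>y\<in>topspace T. f x \<noteq> f y)
        \<longrightarrow> inj_on f (topspace T))"

definition ideal_on :: "'a set \<Rightarrow> ('a \<Rightarrow> 'a \<Rightarrow> 'a) \<Rightarrow> ('a \<Rightarrow> 'a \<Rightarrow> 'a) \<Rightarrow> 'a \<Rightarrow> 'a set \<Rightarrow> bool" where
  "ideal_on S ad mu z A \<longleftrightarrow>
     A \<subseteq> S \<and> z \<in> A \<and>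
     (\<forall>a\<in>A. \<forall>b\<in>A. ad a b \<in> A) \<and>
     (\<forall>r\<in>S. \<forall>a\<in>A. mu r a \<in> A \<and> mu a r \<in> A)"

definition subtractive_on :: "'a set \<Rightarrow> ('a \<Rightarrow> 'a \<Rightarrow> 'a) \<Rightarrow> 'a set \<Rightarrow> bool" where
  "subtractive_on S ad A \<longleftrightarrow> (\<forall>x\<in>S. \<forall>a\<in>A. ad x a \<in> A \<longrightarrow> x \<in> A)"

end

theory Submission
  imports Defs
begin

text \<open>Divide R by the Bourne congruence of A: x \<sim> y iff x + a = y + b for some a, b \<in> A.
  An element x is equivalent to a point of a closed set C iff x + b \<in> C + A for some b \<in> A, so
  by compactness the saturation of C is the projection of a closed subset of R \<times> A, hence closed.
  The quotient map is therefore closed, the quotient is Hausdorff (a closed image of a normal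
  space) and the semiring operations descend continuously: the quotient map is a continuous
  homomorphism into a Hausdorff topological semiring. Subtractivity makes the class of 0 equal
  to A; if A \<noteq> R the map is not constant, so by simplicity it is injective and A = {0}.\<close>

definition quotient_topology :: "'a topology \<Rightarrow> ('a \<Rightarrow> 'b) \<Rightarrow> 'b topology" where
  "quotient_topology X f =
     topology (\<lambda>U. U \<subseteq> f ` topspace X \<and> openin X {x \<in> topspace X. f x \<in> U})"

lemma openin_quotient_topology:
  "openin (quotient_topology X f) U \<longleftrightarrow>
     U \<subseteq> f ` topspace X \<and> openin X {x \<in> topspace X. f x \<in> U}"
proof -
  have inter: "{x \<in> topspace X. f x \<in> U \<inter> V} =
      {x \<in> topspace X. f x \<in> U} \<inter> {x \<in> topspace X. f x \<in> V}" for U V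
    by auto
  have union: "{x \<in> topspace X. f x \<in> \<Union>\<U>} = (\<Union>U\<in>\<U>. {x \<in> topspace X. f x \<in> U})" for \<U>
    by auto
  have "istopology (\<lambda>U. U \<subseteq> f ` topspace X \<and> openin X {x \<in> topspace X. f x \<in> U})"
    unfolding istopology_def inter union by (auto intro!: openin_Union)
  then have "openin (quotient_topology X f) =
      (\<lambda>U. U \<subseteq> f ` topspace X \<and> openin X {x \<in> topspace X. f x \<in> U})"
    unfolding quotient_topology_def by (rule topology_inverse')
  then show ?thesis by simp
qed

lemma topspace_quotient_topology: "topspace (quotient_topology X f) = f ` topspace X"
proof (rule antisym)
  show "topspace (quotient_topology X f) \<subseteq> f ` topspace X"
    by (metis openin_quotient_topology openin_topspace)
  have "{x \<in> topspace X. f x \<in> f ` topspace X} = topspace X"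
    by blast
  then have "openin (quotient_topology X f) (f ` topspace X)"
    by (simp add: openin_quotient_topology)
  then show "f ` topspace X \<subseteq> topspace (quotient_topology X f)"
    by (rule openin_subset)
qed

lemma quotient_map_quotient_topology: "quotient_map X (quotient_topology X f) f"
  by (auto simp: quotient_map_def topspace_quotient_topology openin_quotient_topology)

lemma continuous_map_induced_binop:
  assumes q: "continuous_map X Y q" "q ` topspace X = topspace Y"
    and "compact_space X" "Hausdorff_space Y"
    and f: "continuous_map (prod_topology X X) X (\<lambda>(x, y). f x y)"
    and g: "\<And>x y. x \<in> topspace X \<Longrightarrow> y \<in> topspace X \<Longrightarrow> g (q x) (q y) = q (f x y)"
  shows "continuous_map (prod_topology Y Y) Y (\<lambda>(u, v). g u v)"
proof (rule continuous_compose_quotient_map)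
  show "quotient_map (prod_topology X X) (prod_topology Y Y) (\<lambda>(x, y). (q x, q y))"
  proof (rule continuous_imp_quotient_map)
    show "continuous_map (prod_topology X X) (prod_topology Y Y) (\<lambda>(x, y). (q x, q y))"
      using q(1) by (simp add: continuous_map_prod_top)
    have "(\<lambda>(x, y). (q x, q y)) ` (topspace X \<times> topspace X) = q ` topspace X \<times> q ` topspace X"
      by force
    then show "(\<lambda>(x, y). (q x, q y)) ` topspace (prod_topology X X) = topspace (prod_topology Y Y)"
      using q(2) by simp
    show "compact_space (prod_topology X X)"
      using \<open>compact_space X\<close> by (simp add: compact_space_prod_topology)
    show "Hausdorff_space (prod_topology Y Y)"
      using \<open>Hausdorff_space Y\<close> by (simp add: Hausdorff_space_prod_topology)
  qed
  have "continuous_map (prod_topology X X) Y (q \<circ> (\<lambda>(x, y). f x y))"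
    using f q(1) by (rule continuous_map_compose)
  then show "continuous_map (prod_topology X X) Y ((\<lambda>(u, v). g u v) \<circ> (\<lambda>(x, y). (q x, q y)))"
  proof (rule continuous_map_eq)
    fix p assume "p \<in> topspace (prod_topology X X)"
    then show "(q \<circ> (\<lambda>(x, y). f x y)) p = ((\<lambda>(u, v). g u v) \<circ> (\<lambda>(x, y). (q x, q y))) p"
      by (cases p) (simp add: g)
  qed
qed

locale semiring_with_ideal =
  fixes S :: "'a set" and ad mu :: "'a \<Rightarrow> 'a \<Rightarrow> 'a" and z :: 'a and A :: "'a set"
  assumes semiring: "semiring_on S ad mu z"
    and ideal: "ideal_on S ad mu z A"
begin

lemma zero_closed: "z \<in> S"
  and add_closed: "x \<in> S \<Longrightarrow> y \<in> S \<Longrightarrow> ad x y \<in> S"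
  and mult_closed: "x \<in> S \<Longrightarrow> y \<in> S \<Longrightarrow> mu x y \<in> S"
  and add_assoc: "x \<in> S \<Longrightarrow> y \<in> S \<Longrightarrow> w \<in> S \<Longrightarrow> ad (ad x y) w = ad x (ad y w)"
  and add_commute: "x \<in> S \<Longrightarrow> y \<in> S \<Longrightarrow> ad x y = ad y x"
  and add_zero_left: "x \<in> S \<Longrightarrow> ad z x = x"
  and mult_assoc: "x \<in> S \<Longrightarrow> y \<in> S \<Longrightarrow> w \<in> S \<Longrightarrow> mu (mu x y) w = mu x (mu y w)"
  and distrib_left: "x \<in> S \<Longrightarrow> y \<in> S \<Longrightarrow> w \<in> S \<Longrightarrow> mu x (ad y w) = ad (mu x y) (mu x w)"
  and distrib_right: "x \<in> S \<Longrightarrow> y \<in> S \<Longrightarrow> w \<in> S \<Longrightarrow> mu (ad y w) x = ad (mu y x) (mu w x)"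
  and mult_zero_left: "x \<in> S \<Longrightarrow> mu z x = z"
  and mult_zero_right: "x \<in> S \<Longrightarrow> mu x z = z"
  using semiring unfolding semiring_on_def by blast+

lemma add_zero_right: "x \<in> S \<Longrightarrow> ad x z = x"
  by (metis add_commute add_zero_left zero_closed)

lemma add_left_commute: "x \<in> S \<Longrightarrow> y \<in> S \<Longrightarrow> w \<in> S \<Longrightarrow> ad x (ad y w) = ad y (ad x w)"
  by (metis add_assoc add_commute)

lemma ideal_subset: "A \<subseteq> S"
  and zero_in_ideal: "z \<in> A"
  and ideal_add_closed: "a \<in> A \<Longrightarrow> b \<in> A \<Longrightarrow> ad a b \<in> A"
  and ideal_mult_closed_left: "r \<in> S \<Longrightarrow> a \<in> A \<Longrightarrow> mu r a \<in> A"
  and ideal_mult_closed_right: "r \<in> S \<Longrightarrow> a \<in> A \<Longrightarrow> mu a r \<in> A"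
  using ideal unfolding ideal_on_def by blast+

definition bourne_equiv :: "'a \<Rightarrow> 'a \<Rightarrow> bool" where
  "bourne_equiv x y \<longleftrightarrow> (\<exists>a\<in>A. \<exists>b\<in>A. ad x a = ad y b)"

lemma bourne_equiv_refl: "bourne_equiv x x"
  unfolding bourne_equiv_def using zero_in_ideal by blast

lemma bourne_equiv_sym: "bourne_equiv x y \<Longrightarrow> bourne_equiv y x"
  unfolding bourne_equiv_def by metis

lemma bourne_equiv_trans:
  assumes "x \<in> S" "y \<in> S" "w \<in> S" "bourne_equiv x y" "bourne_equiv y w"
  shows "bourne_equiv x w"
proof -
  obtain a b where ab: "a \<in> A" "b \<in> A" "ad x a = ad y b"
    using assms(4) unfolding bourne_equiv_def by blast
  obtain c d where cd: "c \<in> A" "d \<in> A" "ad y c = ad w d"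
    using assms(5) unfolding bourne_equiv_def by blast
  have S: "a \<in> S" "b \<in> S" "c \<in> S" "d \<in> S"
    using ab cd ideal_subset by auto
  have "ad x (ad a c) = ad (ad x a) c" using assms S by (simp add: add_assoc)
  also have "\<dots> = ad (ad y c) b" using assms S ab by (metis add_assoc add_commute)
  also have "\<dots> = ad w (ad d b)" using assms S cd by (simp add: add_assoc)
  finally show ?thesis
    unfolding bourne_equiv_def using ab cd ideal_add_closed by blast
qed

lemma bourne_equiv_add_right:
  assumes "x \<in> S" "y \<in> S" "u \<in> S" "bourne_equiv x y"
  shows "bourne_equiv (ad x u) (ad y u)"
proof -
  obtain a b where ab: "a \<in> A" "b \<in> A" "ad x a = ad y b"
    using assms(4) unfolding bourne_equiv_def by blast
  then have "a \<in> S" "b \<in> S" using ideal_subset by auto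
  then have "ad (ad x u) a = ad (ad y u) b"
    using assms ab by (metis add_assoc add_commute)
  then show ?thesis unfolding bourne_equiv_def using ab by blast
qed

lemma bourne_equiv_add:
  assumes "x \<in> S" "y \<in> S" "x' \<in> S" "y' \<in> S" "bourne_equiv x x'" "bourne_equiv y y'"
  shows "bourne_equiv (ad x y) (ad x' y')"
proof -
  have "bourne_equiv (ad x y) (ad x' y)"
    using assms by (simp add: bourne_equiv_add_right)
  moreover have "bourne_equiv (ad y x') (ad y' x')"
    using assms by (simp add: bourne_equiv_add_right)
  then have "bourne_equiv (ad x' y) (ad x' y')"
    using assms by (simp add: add_commute)
  ultimately show ?thesis
    by (rule bourne_equiv_trans[rotated 3]) (simp_all add: assms add_closed)
qed

lemma bourne_equiv_mult:
  assumes "x \<in> S" "y \<in> S" "x' \<in> S" "y' \<in> S" "bourne_equiv x x'" "bourne_equiv y y'"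
  shows "bourne_equiv (mu x y) (mu x' y')"
proof -
  obtain a b where ab: "a \<in> A" "b \<in> A" "ad x a = ad x' b"
    using assms(5) unfolding bourne_equiv_def by blast
  obtain c d where cd: "c \<in> A" "d \<in> A" "ad y c = ad y' d"
    using assms(6) unfolding bourne_equiv_def by blast
  have S: "a \<in> S" "b \<in> S" "c \<in> S" "d \<in> S"
    using ab cd ideal_subset by auto
  have "ad (mu x y) (mu a y) = ad (mu x' y) (mu b y)"
    using assms S ab by (metis distrib_right)
  then have "bourne_equiv (mu x y) (mu x' y)"
    using ideal_mult_closed_right[OF assms(2) ab(1)] ideal_mult_closed_right[OF assms(2) ab(2)]
    unfolding bourne_equiv_def by blast
  moreover have "ad (mu x' y) (mu x' c) = ad (mu x' y') (mu x' d)"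
    using assms S cd by (metis distrib_left)
  then have "bourne_equiv (mu x' y) (mu x' y')"
    using ideal_mult_closed_left[OF assms(3) cd(1)] ideal_mult_closed_left[OF assms(3) cd(2)]
    unfolding bourne_equiv_def by blast
  ultimately show ?thesis
    by (rule bourne_equiv_trans[rotated 3]) (simp_all add: assms mult_closed)
qed

definition bourne_class :: "'a \<Rightarrow> 'a set" where
  "bourne_class x = {y \<in> S. bourne_equiv x y}"

lemma bourne_class_self: "x \<in> S \<Longrightarrow> x \<in> bourne_class x"
  unfolding bourne_class_def using bourne_equiv_refl by blast

lemma bourne_class_eq_iff:
  assumes "x \<in> S" "y \<in> S"
  shows "bourne_class x = bourne_class y \<longleftrightarrow> bourne_equiv x y"
proof
  assume "bourne_class x = bourne_class y"
  then show "bourne_equiv x y"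
    using bourne_class_self[OF assms(2)] unfolding bourne_class_def by blast
next
  assume "bourne_equiv x y"
  then show "bourne_class x = bourne_class y"
    unfolding bourne_class_def using assms bourne_equiv_trans bourne_equiv_sym by blast
qed

definition class_rep :: "'a set \<Rightarrow> 'a" where
  "class_rep P = (SOME x. x \<in> P)"

lemma class_rep_bourne_class:
  assumes "x \<in> S"
  shows "class_rep (bourne_class x) \<in> S" "bourne_equiv x (class_rep (bourne_class x))"
proof -
  have "class_rep (bourne_class x) \<in> bourne_class x"
    unfolding class_rep_def using bourne_class_self[OF assms] by (rule someI)
  then show "class_rep (bourne_class x) \<in> S" "bourne_equiv x (class_rep (bourne_class x))"
    unfolding bourne_class_def by auto
qed

definition quotient_add :: "'a set \<Rightarrow> 'a set \<Rightarrow> 'a set" where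
  "quotient_add P Q = bourne_class (ad (class_rep P) (class_rep Q))"

definition quotient_mult :: "'a set \<Rightarrow> 'a set \<Rightarrow> 'a set" where
  "quotient_mult P Q = bourne_class (mu (class_rep P) (class_rep Q))"

lemma quotient_add_bourne_class:
  assumes "x \<in> S" "y \<in> S"
  shows "quotient_add (bourne_class x) (bourne_class y) = bourne_class (ad x y)"
proof -
  let ?x = "class_rep (bourne_class x)" and ?y = "class_rep (bourne_class y)"
  have "?x \<in> S" "?y \<in> S" "bourne_equiv ?x x" "bourne_equiv ?y y"
    using assms class_rep_bourne_class bourne_equiv_sym by auto
  then have "bourne_equiv (ad ?x ?y) (ad x y)"
    using assms by (simp add: bourne_equiv_add)
  then show ?thesis
    unfolding quotient_add_def using assms \<open>?x \<in> S\<close> \<open>?y \<in> S\<close> by (simp add: bourne_class_eq_iff add_closed)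
qed

lemma quotient_mult_bourne_class:
  assumes "x \<in> S" "y \<in> S"
  shows "quotient_mult (bourne_class x) (bourne_class y) = bourne_class (mu x y)"
proof -
  let ?x = "class_rep (bourne_class x)" and ?y = "class_rep (bourne_class y)"
  have "?x \<in> S" "?y \<in> S" "bourne_equiv ?x x" "bourne_equiv ?y y"
    using assms class_rep_bourne_class bourne_equiv_sym by auto
  then have "bourne_equiv (mu ?x ?y) (mu x y)"
    using assms by (simp add: bourne_equiv_mult)
  then show ?thesis
    unfolding quotient_mult_def using assms \<open>?x \<in> S\<close> \<open>?y \<in> S\<close> by (simp add: bourne_class_eq_iff mult_closed)
qed

lemma semiring_on_bourne_quotient:
  "semiring_on (bourne_class ` S) quotient_add quotient_mult (bourne_class z)"
  unfolding semiring_on_def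
  by (auto simp: quotient_add_bourne_class quotient_mult_bourne_class zero_closed add_closed
      mult_closed add_assoc add_commute add_left_commute add_zero_left add_zero_right mult_assoc distrib_left distrib_right
      mult_zero_left mult_zero_right)

lemma semiring_hom_on_bourne_class:
  "semiring_hom_on S ad mu z (bourne_class ` S) quotient_add quotient_mult (bourne_class z)
     bourne_class"
  unfolding semiring_hom_on_def
  by (simp add: quotient_add_bourne_class quotient_mult_bourne_class)

lemma bourne_class_zero:
  assumes "subtractive_on S ad A"
  shows "bourne_class z = A"
proof -
  have "bourne_equiv z y \<longleftrightarrow> y \<in> A" if "y \<in> S" for y
  proof
    assume "bourne_equiv z y"
    then obtain a b where "a \<in> A" "b \<in> A" "ad y b = a"
      unfolding bourne_equiv_def using ideal_subset add_zero_left by fastforce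
    then show "y \<in> A"
      using assms \<open>y \<in> S\<close> unfolding subtractive_on_def by blast
  next
    assume "y \<in> A"
    then have "ad z y = ad y z"
      using that add_zero_left add_zero_right by simp
    then show "bourne_equiv z y"
      unfolding bourne_equiv_def using \<open>y \<in> A\<close> zero_in_ideal by blast
  qed
  then show ?thesis
    unfolding bourne_class_def using ideal_subset by auto
qed

end

locale compact_Hausdorff_semiring_with_closed_ideal = semiring_with_ideal "topspace T" ad mu z A
  for T :: "'a topology" and ad mu :: "'a \<Rightarrow> 'a \<Rightarrow> 'a" and z :: 'a and A :: "'a set" +
  assumes add_continuous: "continuous_map (prod_topology T T) T (\<lambda>(x, y). ad x y)"
    and mult_continuous: "continuous_map (prod_topology T T) T (\<lambda>(x, y). mu x y)"
    and Hausdorff: "Hausdorff_space T"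
    and compact: "compact_space T"
    and closed_ideal: "closedin T A"
begin

lemma closedin_bourne_saturation:
  assumes C: "closedin T C"
  shows "closedin T {x \<in> topspace T. \<exists>c\<in>C. bourne_equiv c x}"
proof -
  define D where "D = (\<lambda>(c, a). ad c a) ` (C \<times> A)"
  define K where
    "K = {p \<in> topspace (prod_topology T T). (\<lambda>(x, b). ad x b) p \<in> D} \<inter> (topspace T \<times> A)"
  have compact2: "compact_space (prod_topology T T)"
    using compact by (simp add: compact_space_prod_topology)
  have "closed_map (prod_topology T T) T (\<lambda>(x, y). ad x y)"
    using add_continuous compact2 Hausdorff by (rule continuous_imp_closed_map)
  moreover have "closedin (prod_topology T T) (C \<times> A)"
    using C closed_ideal by (simp add: closedin_prod_Times_iff)
  ultimately have "closedin T D"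
    unfolding D_def closed_map_def by blast
  then have "closedin (prod_topology T T) K"
    unfolding K_def using closed_ideal
    by (intro closedin_Int closedin_continuous_map_preimage[OF add_continuous])
      (simp_all add: closedin_prod_Times_iff)
  moreover have "closed_map (prod_topology T T) T fst"
    using continuous_map_fst compact2 Hausdorff by (rule continuous_imp_closed_map)
  ultimately have "closedin T (fst ` K)"
    by (simp add: closed_map_def)
  moreover have "fst ` K = {x \<in> topspace T. \<exists>c\<in>C. bourne_equiv c x}"
  proof (intro equalityI subsetI)
    fix x assume "x \<in> fst ` K"
    then obtain b c a where "x \<in> topspace T" "b \<in> A" "c \<in> C" "a \<in> A" "ad c a = ad x b"
      unfolding K_def D_def by force
    then show "x \<in> {x \<in> topspace T. \<exists>c\<in>C. bourne_equiv c x}"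
      unfolding bourne_equiv_def by blast
  next
    fix x assume "x \<in> {x \<in> topspace T. \<exists>c\<in>C. bourne_equiv c x}"
    then obtain c a b where x: "x \<in> topspace T" and c: "c \<in> C"
      and ab: "a \<in> A" "b \<in> A" "ad c a = ad x b"
      unfolding bourne_equiv_def by blast
    then have "ad x b \<in> D"
      unfolding D_def by (auto intro!: image_eqI[where x = "(c, a)"])
    then have "(x, b) \<in> K"
      unfolding K_def using x ab ideal_subset by auto
    then show "x \<in> fst ` K"
      by force
  qed
  ultimately show ?thesis
    by simp
qed

lemma closed_map_bourne_class: "closed_map T (quotient_topology T bourne_class) bourne_class"
  unfolding closed_map_def
proof (intro allI impI)
  fix C assume C: "closedin T C"
  then have "C \<subseteq> topspace T"
    by (rule closedin_subset)
  then have "{x \<in> topspace T. bourne_class x \<in> bourne_class ` C} =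
      {x \<in> topspace T. \<exists>c\<in>C. bourne_equiv c x}"
    using bourne_class_eq_iff by blast
  then have "closedin T {x \<in> topspace T. bourne_class x \<in> bourne_class ` C}"
    using closedin_bourne_saturation[OF C] by simp
  moreover have "bourne_class ` C \<subseteq> topspace (quotient_topology T bourne_class)"
    using \<open>C \<subseteq> topspace T\<close> by (auto simp: topspace_quotient_topology)
  ultimately show "closedin (quotient_topology T bourne_class) (bourne_class ` C)"
    using quotient_map_quotient_topology[of T bourne_class]
    unfolding quotient_map_closedin by (meson mem_Collect_eq)
qed

lemma continuous_map_bourne_class: "continuous_map T (quotient_topology T bourne_class) bourne_class"
  by (rule quotient_imp_continuous_map[OF quotient_map_quotient_topology])

lemma Hausdorff_space_bourne_quotient: "Hausdorff_space (quotient_topology T bourne_class)"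
proof -
  have "normal_space T"
    using compact Hausdorff by (simp add: compact_Hausdorff_or_regular_imp_normal_space)
  then show ?thesis
    using normal_Hausdorff_space_closed_continuous_map_image[OF _ Hausdorff
        closed_map_bourne_class continuous_map_bourne_class topspace_quotient_topology[symmetric]]
    by blast
qed

lemma top_semiring_bourne_quotient:
  "top_semiring (quotient_topology T bourne_class) quotient_add quotient_mult (bourne_class z)"
  unfolding top_semiring_def topspace_quotient_topology
proof (intro conjI)
  show "semiring_on (bourne_class ` topspace T) quotient_add quotient_mult (bourne_class z)"
    by (rule semiring_on_bourne_quotient)
  show "continuous_map (prod_topology (quotient_topology T bourne_class) (quotient_topology T bourne_class))
      (quotient_topology T bourne_class) (\<lambda>(P, Q). quotient_add P Q)"
    by (rule continuous_map_induced_binop[where g = quotient_add, OF continuous_map_bourne_class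
          topspace_quotient_topology[symmetric] compact Hausdorff_space_bourne_quotient
          add_continuous quotient_add_bourne_class])
  show "continuous_map (prod_topology (quotient_topology T bourne_class) (quotient_topology T bourne_class))
      (quotient_topology T bourne_class) (\<lambda>(P, Q). quotient_mult P Q)"
    by (rule continuous_map_induced_binop[where g = quotient_mult, OF continuous_map_bourne_class
          topspace_quotient_topology[symmetric] compact Hausdorff_space_bourne_quotient
          mult_continuous quotient_mult_bourne_class])
qed

end

lemma simple_top_semiring_inj_on:
  fixes T :: "'a topology" and T' :: "'a set topology"
  assumes "simple_top_semiring T ad mu z"
    and "top_semiring T' ad' mu' z'" "Hausdorff_space T'"
    and "semiring_hom_on (topspace T) ad mu z (topspace T') ad' mu' z' f"
    and "continuous_map T T' f"
    and "x \<in> topspace T" "y \<in> topspace T" "f x \<noteq> f y"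
  shows "inj_on f (topspace T)"
  using assms unfolding simple_top_semiring_def by blast

theorem corollary4p3:
  fixes T :: "'a topology" and ad mu :: "'a \<Rightarrow> 'a \<Rightarrow> 'a" and z :: 'a and A :: "'a set"
  assumes "simple_top_semiring T ad mu z"
    and "compact_space T"
    and "ideal_on (topspace T) ad mu z A"
    and "subtractive_on (topspace T) ad A"
    and "closedin T A"
  shows "A = {z} \<or> A = topspace T"
proof -
  interpret compact_Hausdorff_semiring_with_closed_ideal T ad mu z A
    using assms unfolding simple_top_semiring_def top_semiring_def by unfold_locales auto
  have class_zero: "bourne_class z = A"
    using assms(4) by (rule bourne_class_zero)
  show ?thesis
  proof (rule disjCI)
    assume "A \<noteq> topspace T"
    then obtain y where y: "y \<in> topspace T" "y \<notin> A"
      using ideal_subset by blast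
    then have "bourne_class y \<noteq> bourne_class z"
      using class_zero bourne_class_self by blast
    then have inj: "inj_on bourne_class (topspace T)"
      by (intro simple_top_semiring_inj_on[OF assms(1) top_semiring_bourne_quotient
            Hausdorff_space_bourne_quotient _ continuous_map_bourne_class y(1) zero_closed])
        (simp add: semiring_hom_on_bourne_class topspace_quotient_topology)
    have "a = z" if "a \<in> A" for a
    proof -
      have "a \<in> topspace T" "bourne_equiv z a"
        using that class_zero unfolding bourne_class_def by auto
      then have "bourne_class a = bourne_class z"
        using bourne_class_eq_iff zero_closed bourne_equiv_sym by blast
      then show "a = z"
        using inj \<open>a \<in> topspace T\<close> zero_closed by (auto dest: inj_onD)
    qed
    then show "A = {z}"
      using zero_in_ideal by blast
  qed
qed

end
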